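(* Let $f_0,\ldots,f_{k-1}$, $k\ge2$, be diffeomorphisms of $S^n$ generating a minimal iterated function system, where $f_0$ is a north–south diffeomorphism with hyperbolic repelling fixed point $P_0$. Let $m$ be a stationary measure for the iterated function system with probabilities $p_0,\ldots,p_{k-1}$. Then $m(\{P_0\})=0$.
   Context: A north–south diffeomorphism of $S^n$ has a hyperbolic repelling fixed point $P_0$ and a hyperbolic attracting fixed point $Q_0$ whose basin of attraction is $S^n\setminus\{P_0\}$. The iterated function system is minimal if for every $x\in S^n$ some sequence $x_0=x$, $x_{j+1}=f_{i_j}(x_j)$ is dense in $S^n$. Given probabilities $p_i\in(0,1)$ with $\sum p_i=1$, a stationary measure is a Borel probability measure $m$ with $m=\sum_i p_i f_i m$, where $f_im(A)=m(f_i^{-1}(A))$. *)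

theory Defs
  imports "HOL-Analysis.Analysis" "HOL-Probability.Probability"
begin

text \<open>The n-sphere is the unit sphere of a Euclidean space 'a, with n = DIM('a) - 1.\<close>

definition C1_on_sphere :: "('a::euclidean_space \<Rightarrow> 'a) \<Rightarrow> bool" where
  "C1_on_sphere f \<longleftrightarrow>
     (\<exists>(U :: 'a set) F (F' :: 'a \<Rightarrow> 'a \<Rightarrow>\<^sub>L 'a). open U \<and> sphere 0 1 \<subseteq> U \<and>
        (\<forall>x\<in>sphere 0 1. F x = f x) \<and>
        (\<forall>x\<in>U. (F has_derivative blinfun_apply (F' x)) (at x)) \<and> continuous_on U F')"

definition sphere_diffeo :: "('a::euclidean_space \<Rightarrow> 'a) \<Rightarrow> bool" where
  "sphere_diffeo f \<longleftrightarrow> f ` sphere 0 1 = sphere 0 1 \<and> inj_on f (sphere 0 1) \<and>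
     C1_on_sphere f \<and> C1_on_sphere (the_inv_into (sphere 0 1) f)"

definition tangent_space :: "'a::euclidean_space \<Rightarrow> 'a set" where
  "tangent_space P = {v. v \<bullet> P = 0}"

text \<open>Eigenvalue of the complexification of a real linear map L on a real subspace T:
  L(u + i v) = \<lambda>(u + i v) with u, v in T not both zero.\<close>
definition cplx_eigenvalue_on :: "('a::real_vector \<Rightarrow> 'a) \<Rightarrow> 'a set \<Rightarrow> complex \<Rightarrow> bool" where
  "cplx_eigenvalue_on L T lam \<longleftrightarrow>
     (\<exists>u\<in>T. \<exists>v\<in>T. (u \<noteq> 0 \<or> v \<noteq> 0) \<and>
        L u = Re lam *\<^sub>R u - Im lam *\<^sub>R v \<and> L v = Im lam *\<^sub>R u + Re lam *\<^sub>R v)"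

definition hyp_repelling_fp :: "('a::euclidean_space \<Rightarrow> 'a) \<Rightarrow> 'a \<Rightarrow> bool" where
  "hyp_repelling_fp f P \<longleftrightarrow> P \<in> sphere 0 1 \<and> f P = P \<and>
     (\<exists>(U :: 'a set) (F :: 'a \<Rightarrow> 'a) L. open U \<and> sphere 0 1 \<subseteq> U \<and> (\<forall>x\<in>sphere 0 1. F x = f x) \<and>
        (F has_derivative L) (at P) \<and>
        (\<forall>lam. cplx_eigenvalue_on L (tangent_space P) lam \<longrightarrow> cmod lam > 1))"

definition hyp_attracting_fp :: "('a::euclidean_space \<Rightarrow> 'a) \<Rightarrow> 'a \<Rightarrow> bool" where
  "hyp_attracting_fp f Q \<longleftrightarrow> Q \<in> sphere 0 1 \<and> f Q = Q \<and>
     (\<exists>(U :: 'a set) (F :: 'a \<Rightarrow> 'a) L. open U \<and> sphere 0 1 \<subseteq> U \<and> (\<forall>x\<in>sphere 0 1. F x = f x) \<and>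
        (F has_derivative L) (at Q) \<and>
        (\<forall>lam. cplx_eigenvalue_on L (tangent_space Q) lam \<longrightarrow> cmod lam < 1))"

definition north_south :: "('a::euclidean_space \<Rightarrow> 'a) \<Rightarrow> 'a \<Rightarrow> 'a \<Rightarrow> bool" where
  "north_south f P Q \<longleftrightarrow> hyp_repelling_fp f P \<and> hyp_attracting_fp f Q \<and>
     {x \<in> sphere 0 1. (\<lambda>j. (f ^^ j) x) \<longlonglongrightarrow> Q} = sphere 0 1 - {P}"

primrec ifs_orbit :: "(nat \<Rightarrow> 'a \<Rightarrow> 'a) \<Rightarrow> (nat \<Rightarrow> nat) \<Rightarrow> 'a \<Rightarrow> nat \<Rightarrow> 'a" where
  "ifs_orbit f i x 0 = x"
| "ifs_orbit f i x (Suc j) = f (i j) (ifs_orbit f i x j)"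

definition minimal_ifs :: "nat \<Rightarrow> (nat \<Rightarrow> 'a::euclidean_space \<Rightarrow> 'a) \<Rightarrow> bool" where
  "minimal_ifs k f \<longleftrightarrow> (\<forall>x\<in>sphere 0 1. \<exists>i. (\<forall>j. i j < k) \<and>
      sphere 0 1 \<subseteq> closure (range (ifs_orbit f i x)))"

definition stationary_measure ::
  "nat \<Rightarrow> (nat \<Rightarrow> 'a::euclidean_space \<Rightarrow> 'a) \<Rightarrow> (nat \<Rightarrow> real) \<Rightarrow> 'a measure \<Rightarrow> bool" where
  "stationary_measure k f p m \<longleftrightarrow> prob_space m \<and>
     sets m = sets (restrict_space borel (sphere 0 1)) \<and>
     (\<forall>A\<in>sets m. emeasure m A =
        (\<Sum>i<k. ennreal (p i) * emeasure m (f i -` A \<inter> space m)))"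

end

theory Submission
  imports Defs
begin

text \<open>Suppose some point carries positive mass and let \<open>c\<close> be the largest atom, which exists since
  a probability measure has only finitely many atoms of mass \<open>\<ge> \<epsilon>\<close>. Stationarity writes the mass
  of each point \<open>y\<close> as the \<open>p\<close>-average of the masses of its preimages \<open>f\<^sub>i\<^sup>-\<^sup>1 y\<close>, so all
  preimages of a point of mass \<open>c\<close> have mass \<open>c\<close>. The finite set of atoms of mass \<open>c\<close> is thus
  mapped into itself by every \<open>f\<^sub>i\<^sup>-\<^sup>1\<close>, hence (being finite) also by every \<open>f\<^sub>i\<close>. By minimality
  an orbit inside this finite set is dense in the sphere, which is impossible as the sphere is
  infinite.\<close>

lemma infinite_sphere:
  fixes a :: "'a::euclidean_space"
  assumes "DIM('a) \<ge> 2" and "0 < r"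
  shows "infinite (sphere a r)"
proof
  assume fin: "finite (sphere a r)"
  obtain b :: 'a where b: "b \<in> Basis" using nonempty_Basis by blast
  have "a + r *\<^sub>R b \<in> sphere a r" "a - r *\<^sub>R b \<in> sphere a r"
    using b \<open>0 < r\<close> by (auto simp: dist_norm)
  moreover have "a + r *\<^sub>R b \<noteq> a - r *\<^sub>R b"
  proof
    assume "a + r *\<^sub>R b = a - r *\<^sub>R b"
    then have "(r + r) *\<^sub>R b = 0"
      by (metis add_left_cancel eq_neg_iff_add_eq_0 diff_conv_add_uminus scaleR_add_left)
    with b \<open>0 < r\<close> show False by auto
  qed
  moreover have "sphere a r = {} \<or> (\<exists>z. sphere a r = {z})"
    using connected_finite_iff_sing[OF connected_sphere[OF assms(1)]] fin by auto
  ultimately show False by (metis empty_iff singletonD)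
qed

lemma finite_heavy_atoms:
  assumes "finite_measure M" and "0 < a"
  shows "finite {x. {x} \<in> sets M \<and> a \<le> measure M {x}}" (is "finite ?H")
proof -
  interpret finite_measure M by fact
  have "card G \<le> nat \<lfloor>measure M (space M) / a\<rfloor>" if "G \<subseteq> ?H" "finite G" for G
  proof -
    have "card G * a = (\<Sum>x\<in>G. a)"
      by simp
    also have "\<dots> \<le> (\<Sum>x\<in>G. measure M {x})"
      using that by (intro sum_mono) auto
    also have "\<dots> = measure M (\<Union>x\<in>G. {x})"
      using that by (intro measure_finite_Union[symmetric]) (auto simp: disjoint_family_on_def)
    also have "\<dots> \<le> measure M (space M)"
      using that by (intro bounded_measure)
    finally show ?thesis
      using \<open>0 < a\<close> by (simp add: le_nat_floor field_simps)
  qed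
  then show ?thesis
    using finite_if_finite_subsets_card_bdd by blast
qed

lemma finite_measure_max_atom:
  assumes "finite_measure M" and singletons: "\<And>x. x \<in> space M \<Longrightarrow> {x} \<in> sets M"
    and "x \<in> space M" and "0 < measure M {x}"
  obtains c where "\<forall>y\<in>space M. measure M {y} \<le> c"
    and "finite {y \<in> space M. measure M {y} = c}" and "{y \<in> space M. measure M {y} = c} \<noteq> {}"
proof -
  define B where "B = {y \<in> space M. measure M {x} \<le> measure M {y}}"
  have "B \<subseteq> {y. {y} \<in> sets M \<and> measure M {x} \<le> measure M {y}}"
    using singletons by (auto simp: B_def)
  then have "finite B"
    using finite_heavy_atoms[OF assms(1,4)] finite_subset by blast
  moreover have "x \<in> B"
    using assms(3) by (simp add: B_def)
  ultimately have "Max ((\<lambda>y. measure M {y}) ` B) \<in> (\<lambda>y. measure M {y}) ` B"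
    by (intro Max_in) auto
  then obtain z where "z \<in> B" and "measure M {z} = Max ((\<lambda>y. measure M {y}) ` B)"
    by (metis (no_types, lifting) imageE)
  with \<open>finite B\<close> have z: "z \<in> B" "\<forall>y\<in>B. measure M {y} \<le> measure M {z}"
    by auto
  show thesis
  proof
    show "\<forall>y\<in>space M. measure M {y} \<le> measure M {z}"
      using z by (fastforce simp: B_def)
    show "finite {y \<in> space M. measure M {y} = measure M {z}}"
      using z by (intro finite_subset[OF _ \<open>finite B\<close>]) (auto simp: B_def)
    show "{y \<in> space M. measure M {y} = measure M {z}} \<noteq> {}"
      using z by (auto simp: B_def)
  qed
qed

lemma convex_combination_eq_max:
  fixes x p :: "'i \<Rightarrow> real"
  assumes "finite I" and "\<forall>j\<in>I. 0 < p j" and "sum p I = 1"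
    and "\<forall>j\<in>I. x j \<le> c" and "(\<Sum>j\<in>I. p j * x j) = c" and "i \<in> I"
  shows "x i = c"
proof -
  have "(\<Sum>j\<in>I. p j * (c - x j)) = 0"
    using assms(3,5) by (simp add: sum_subtractf right_diff_distrib sum_distrib_right[symmetric])
  then have "\<forall>j\<in>I. p j * (c - x j) = 0"
    using assms(1,2,4) by (subst sum_nonneg_eq_0_iff[symmetric]) (auto intro!: sum_nonneg)
  then show ?thesis
    using assms(2,6) by fastforce
qed

lemma stationary_measure_space:
  assumes "stationary_measure k f p m"
  shows "space m = sphere 0 1" and "\<And>x. x \<in> sphere 0 1 \<Longrightarrow> {x} \<in> sets m"
  using assms sets_eq_imp_space_eq[of m "restrict_space borel (sphere 0 1)"]
  by (auto simp: stationary_measure_def space_restrict_space sets_restrict_space image_iff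
      intro!: bexI[of _ "{x}" for x])

lemma stationary_measure_atom:
  assumes stat: "stationary_measure k f p m"
    and bij: "\<forall>i<k. bij_betw (f i) (sphere 0 1) (sphere 0 1)"
    and p: "\<forall>i<k. 0 \<le> p i" and y: "y \<in> sphere 0 1"
  shows "measure m {y} = (\<Sum>i<k. p i * measure m {the_inv_into (sphere 0 1) (f i) y})"
proof -
  interpret prob_space m
    using stat by (simp add: stationary_measure_def)
  note space = stationary_measure_space[OF stat]
  have preimage: "f i -` {y} \<inter> space m = {the_inv_into (sphere 0 1) (f i) y}" if "i < k" for i
  proof -
    have inj: "inj_on (f i) (sphere 0 1)" and y_img: "y \<in> f i ` sphere 0 1"
      using bij that y by (auto simp: bij_betw_def)
    have "the_inv_into (sphere 0 1) (f i) y \<in> f i -` {y} \<inter> sphere 0 1"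
      using the_inv_into_into[OF inj y_img order_refl] f_the_inv_into_f[OF inj y_img] by simp
    moreover have "x = the_inv_into (sphere 0 1) (f i) y" if "x \<in> f i -` {y} \<inter> sphere 0 1" for x
      using that the_inv_into_f_eq[OF inj, of x y] by auto
    ultimately show ?thesis
      unfolding space(1) by blast
  qed
  have "ennreal (measure m {y}) = (\<Sum>i<k. ennreal (p i) * emeasure m (f i -` {y} \<inter> space m))"
    using stat space(2)[OF y] by (simp add: stationary_measure_def emeasure_eq_measure)
  also have "\<dots> = (\<Sum>i<k. ennreal (p i * measure m {the_inv_into (sphere 0 1) (f i) y}))"
    using p by (intro sum.cong) (simp_all add: preimage emeasure_eq_measure ennreal_mult)
  also have "\<dots> = ennreal (\<Sum>i<k. p i * measure m {the_inv_into (sphere 0 1) (f i) y})"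
    using p by (intro sum_ennreal) simp
  finally show ?thesis
    using p by (subst (asm) ennreal_inj) (auto intro: sum_nonneg)
qed

lemma stationary_max_atoms_invariant:
  assumes stat: "stationary_measure k f p m"
    and bij: "\<forall>i<k. bij_betw (f i) (sphere 0 1) (sphere 0 1)"
    and p: "\<forall>i<k. 0 < p i" "(\<Sum>i<k. p i) = 1"
    and max: "\<forall>y\<in>sphere 0 1. measure m {y} \<le> c"
    and fin: "finite {y \<in> sphere 0 1. measure m {y} = c}" (is "finite ?A")
    and "i < k"
  shows "f i ` ?A \<subseteq> ?A"
proof -
  let ?g = "\<lambda>j. the_inv_into (sphere 0 1) (f j)"
  have g_sphere: "bij_betw (?g j) (sphere 0 1) (sphere 0 1)" if "j < k" for j
    using bij that by (simp add: bij_betw_the_inv_into)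
  have "?g i ` ?A \<subseteq> ?A"
  proof (rule image_subsetI)
    fix y assume "y \<in> ?A"
    then have y: "y \<in> sphere 0 1" and "measure m {y} = c" by auto
    then have "(\<Sum>j<k. p j * measure m {?g j y}) = c"
      using stationary_measure_atom[OF stat bij _ y] p by (simp add: less_imp_le)
    moreover have g_y: "?g j y \<in> sphere 0 1" if "j < k" for j
      using g_sphere[OF that] y by (rule bij_betw_apply)
    ultimately have "measure m {?g i y} = c"
      using convex_combination_eq_max[of "{..<k}" p "\<lambda>j. measure m {?g j y}" c i] max p g_y \<open>i < k\<close>
      by simp
    with g_y[OF \<open>i < k\<close>] show "?g i y \<in> ?A"
      by simp
  qed
  moreover have "inj_on (?g i) ?A"
    using bij_betw_imp_inj_on[OF g_sphere[OF \<open>i < k\<close>]] by (rule inj_on_subset) blast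
  ultimately have "?g i ` ?A = ?A"
    by (intro endo_inj_surj[OF fin])
  then have "f i ` ?A = (\<lambda>y. f i (?g i y)) ` ?A"
    by (metis image_image)
  also have "\<dots> = ?A"
  proof -
    have "f i (?g i y) = y" if "y \<in> sphere 0 1" for y
      using f_the_inv_into_f_bij_betw[of "f i"] bij \<open>i < k\<close> that by blast
    then have "(\<lambda>y. f i (?g i y)) ` ?A = id ` ?A"
      by (intro image_cong) auto
    then show ?thesis
      by simp
  qed
  finally show ?thesis by simp
qed

lemma minimal_ifs_invariant_closed:
  assumes "minimal_ifs k f" and "closed A" and "A \<subseteq> sphere 0 1" and "A \<noteq> {}"
    and invariant: "\<forall>i<k. f i ` A \<subseteq> A"
  shows "sphere 0 1 \<subseteq> A"
proof -
  obtain x where x: "x \<in> A" using \<open>A \<noteq> {}\<close> by blast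
  with \<open>A \<subseteq> sphere 0 1\<close> have "x \<in> sphere 0 1" ..
  then obtain idx where idx: "\<forall>j. idx j < k" "sphere 0 1 \<subseteq> closure (range (ifs_orbit f idx x))"
    using \<open>minimal_ifs k f\<close> unfolding minimal_ifs_def by blast
  have "ifs_orbit f idx x j \<in> A" for j
  proof (induction j)
    case (Suc j)
    then show ?case using idx(1) invariant by (simp add: image_subset_iff)
  qed (use x in simp)
  then have "closure (range (ifs_orbit f idx x)) \<subseteq> A"
    using \<open>closed A\<close> by (intro closure_minimal) blast+
  with idx(2) show ?thesis by blast
qed

theorem stationary_measure_no_atoms:
  fixes f :: "nat \<Rightarrow> 'a::euclidean_space \<Rightarrow> 'a"
  assumes "DIM('a) \<ge> 2"
    and bij: "\<forall>i<k. bij_betw (f i) (sphere 0 1) (sphere 0 1)"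
    and "minimal_ifs k f"
    and p: "\<forall>i<k. 0 < p i" "(\<Sum>i<k. p i) = 1"
    and stat: "stationary_measure k f p m"
  shows "emeasure m {x} = 0"
proof (rule ccontr)
  assume "emeasure m {x} \<noteq> 0"
  interpret prob_space m
    using stat by (simp add: stationary_measure_def)
  note space = stationary_measure_space[OF stat]
  have "{x} \<in> events"
    using \<open>emeasure m {x} \<noteq> 0\<close> emeasure_notin_sets by blast
  then have x: "x \<in> space m" "0 < measure m {x}"
    using \<open>emeasure m {x} \<noteq> 0\<close> sets.sets_into_space
    by (auto simp: emeasure_eq_measure zero_less_measure_iff)
  obtain c where max: "\<forall>y\<in>sphere 0 1. measure m {y} \<le> c"
    and fin: "finite {y \<in> sphere 0 1. measure m {y} = c}"
    and nonempty: "{y \<in> sphere 0 1. measure m {y} = c} \<noteq> {}"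
    using finite_measure_max_atom[OF finite_measure_axioms space(2) x] unfolding space(1) by blast
  have "sphere 0 1 \<subseteq> {y \<in> sphere 0 1. measure m {y} = c}"
  proof (rule minimal_ifs_invariant_closed[OF \<open>minimal_ifs k f\<close> finite_imp_closed[OF fin] _ nonempty])
    show "\<forall>i<k. f i ` {y \<in> sphere 0 1. measure m {y} = c} \<subseteq> {y \<in> sphere 0 1. measure m {y} = c}"
      using stationary_max_atoms_invariant[OF stat bij p max fin] by blast
  qed blast
  with fin have "finite (sphere (0::'a) 1)"
    by (rule finite_subset[rotated])
  with infinite_sphere[OF \<open>DIM('a) \<ge> 2\<close>] show False
    by simp
qed

theorem lemma3p4:
  fixes f :: "nat \<Rightarrow> 'a::euclidean_space \<Rightarrow> 'a"
    and k :: nat and p :: "nat \<Rightarrow> real" and m :: "'a measure" and P0 Q0 :: 'a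
  assumes "DIM('a) \<ge> 2"
    and "k \<ge> 2"
    and "\<forall>i<k. sphere_diffeo (f i)"
    and "minimal_ifs k f"
    and "north_south (f 0) P0 Q0"
    and "\<forall>i<k. 0 < p i \<and> p i < 1"
    and "(\<Sum>i<k. p i) = 1"
    and "stationary_measure k f p m"
  shows "emeasure m {P0} = 0"
proof (rule stationary_measure_no_atoms[OF assms(1) _ assms(4) _ assms(7,8)])
  show "\<forall>i<k. bij_betw (f i) (sphere 0 1) (sphere 0 1)"
    using assms(3) by (simp add: sphere_diffeo_def bij_betw_def)
  show "\<forall>i<k. 0 < p i"
    using assms(6) by simp
qed

end
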